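(* Let $q$, $\lambda\in(0,\infty)$, $U_1,U_2,U_3$ be as in the context. (i) For any constants $\beta_2,\beta_3$, if $R$ denotes the third component of $\beta_2U_2+\beta_3U_3$, then for every $x_0>0$, \[\lim_{N\to\infty}\frac{\int_{x_0}^NR(x,\lambda)\,dx}{\int_{x_0}^NR_1(x,\lambda)\,dx}=0.\] (ii) If $U_1=\tilde a((u')^2,-2uu',u^2)^T+\tilde b(u'v',-(uv'+u'v),uv)^T+\tilde c((v')^2,-2vv',v^2)^T$, then $\tilde a(\lambda)>0$ and $\tilde c(\lambda)>0$ for all $\lambda\in(0,\infty)$.
   Context: $q(x)=\frac{q_0}{x^2}+\frac{q_1}{x}+\sum_{n\ge0}q_{n+2}x^n$, real coefficients, convergent on $(0,\infty)$, $q_0\ge-\tfrac14$, $q_0,q_1$ not both zero; for some $x_0>0$ either $q\in L_1(x_0,\infty)$, or $q'\in L_1(x_0,\infty)$, $q\in AC_{loc}[x_0,\infty)$ and $q\to0$ at $\infty$. Appell system: $(P,Q,R)'=M(P,Q,R)^T$, $M=\begin{pmatrix}0&\lambda-q&0\\-2&0&2(\lambda-q)\\0&-1&0\end{pmatrix}$; $U_1=(P_1,Q_1,R_1)^T$ is its unique solution with $\lim_{x\to\infty}U_1=(\sqrt\lambda,0,1/\sqrt\lambda)^T$. For fixed $c>0$, $\gamma(x)=\int_c^xdt/R_1(t,\lambda)$, $U_2=(P_1\cos2\gamma+(Q_1/R_1)\sin2\gamma-(2/R_1)\cos2\gamma,\ Q_1\cos2\gamma+2\sin2\gamma,\ R_1\cos2\gamma)^T$,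 $U_3=(P_1\sin2\gamma-(Q_1/R_1)\cos2\gamma-(2/R_1)\sin2\gamma,\ Q_1\sin2\gamma-2\cos2\gamma,\ R_1\sin2\gamma)^T$. For fixed $A>0$, $u,v$ solve $-y''+qy=\lambda y$ with $u(A)=1,u'(A)=0,v(A)=0,v'(A)=1$, and $\tilde a,\tilde b,\tilde c$ are real. *)

theory Defs
  imports "HOL-Analysis.Analysis"
begin

definition oint :: "real \<Rightarrow> real \<Rightarrow> (real \<Rightarrow> real) \<Rightarrow> real" where
  "oint a b f = (if a \<le> b then integral {a..b} f else - integral {b..a} f)"

end

theory Submission imports Defs begin

text \<open>
  Along any solution of the Appell system the quantity \<open>4 P R - Q\<^sup>2\<close> has derivative zero,
  so it equals its value \<open>4\<close> at infinity. Hence \<open>R\<^sub>1\<close> never vanishes; being positive at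
  infinity it is positive everywhere, and then so is \<open>P\<^sub>1\<close>. Evaluating the representation
  of \<open>U\<^sub>1\<close> at \<open>A\<close>, where \<open>(u, u', v, v') = (1, 0, 0, 1)\<close>, gives \<open>R\<^sub>1(A) = a\<close> and
  \<open>P\<^sub>1(A) = c\<close>, which is part (ii).

  For part (i), \<open>\<gamma>' = 1/R\<^sub>1\<close> makes \<open>R\<^sub>1 cos 2\<gamma>\<close> and \<open>R\<^sub>1 sin 2\<gamma>\<close> derivatives of bounded
  functions up to the error \<open>R\<^sub>1 Q\<^sub>1 \<times> (bounded)\<close>, which is \<open>o(R\<^sub>1)\<close> since \<open>Q\<^sub>1 \<rightarrow> 0\<close>.
  As \<open>\<integral> R\<^sub>1\<close> grows linearly, L'Hospital's rule gives the vanishing ratio.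
\<close>

definition appell_system ::
    "real \<Rightarrow> (real \<Rightarrow> real) \<Rightarrow> real set \<Rightarrow> (real \<Rightarrow> real) \<Rightarrow> (real \<Rightarrow> real) \<Rightarrow> (real \<Rightarrow> real) \<Rightarrow> bool"
  where "appell_system lam q S P Q R \<longleftrightarrow>
    (\<forall>x\<in>S. (P has_real_derivative (lam - q x) * Q x) (at x) \<and>
            (Q has_real_derivative - 2 * P x + 2 * (lam - q x) * R x) (at x) \<and>
            (R has_real_derivative - Q x) (at x))"

lemma integral_has_real_derivative_interior:
  fixes f :: "real \<Rightarrow> real"
  assumes "continuous_on {a..b} f" "x \<in> {a<..<b}"
  shows "((\<lambda>y. integral {a..y} f) has_real_derivative f x) (at x)"
proof -
  have "((\<lambda>y. integral {a..y} f) has_real_derivative f x) (at x within {a..b})"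
    using assms by (intro integral_has_real_derivative) auto
  then have "((\<lambda>y. integral {a..y} f) has_real_derivative f x) (at x within {a<..<b})"
    by (rule DERIV_subset) auto
  moreover have "at x within {a<..<b} = at x"
    using assms(2) by (intro at_within_open) auto
  ultimately show ?thesis by simp
qed

lemma integral_atLeast_has_real_derivative:
  fixes f :: "real \<Rightarrow> real"
  assumes f: "continuous_on {a..} f" and "x > a"
  shows "((\<lambda>y. integral {a..y} f) has_real_derivative f x) (at x)"
  using \<open>x > a\<close>
  by (intro integral_has_real_derivative_interior[where b = "x + 1"] continuous_on_subset[OF f]) auto

lemma oint_eq_integral_diff:
  fixes f :: "real \<Rightarrow> real"
  assumes f: "f integrable_on {e..b}" and "c \<in> {e..b}" "y \<in> {e..b}"
  shows "oint c y f = integral {e..y} f - integral {e..c} f"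
proof -
  have f_int: "f integrable_on {s..t}" if "e \<le> s" "t \<le> b" for s t
    using integrable_subinterval_real[OF f] that by auto
  show ?thesis
  proof (cases "c \<le> y")
    case True
    then have "integral {e..c} f + integral {c..y} f = integral {e..y} f"
      using assms by (intro Henstock_Kurzweil_Integration.integral_combine f_int) auto
    then show ?thesis using True by (simp add: oint_def)
  next
    case False
    then have "integral {e..y} f + integral {y..c} f = integral {e..c} f"
      using assms by (intro Henstock_Kurzweil_Integration.integral_combine f_int) auto
    then show ?thesis using False by (simp add: oint_def)
  qed
qed

lemma oint_has_real_derivative:
  fixes f :: "real \<Rightarrow> real"
  assumes f: "continuous_on {a<..} f" and "c > a" "x > a"
  shows "((\<lambda>y. oint c y f) has_real_derivative f x) (at x)"
proof -
  define e where "e = (a + min c x) / 2"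
  define b where "b = max c x + 1"
  have e: "a < e" "e < c" "e < x" and b: "c < b" "x < b"
    using assms by (auto simp: e_def b_def)
  have f_cont: "continuous_on {e..b} f"
    using e by (intro continuous_on_subset[OF f]) auto
  have "((\<lambda>y. integral {e..y} f - integral {e..c} f) has_real_derivative f x) (at x)"
    using integral_has_real_derivative_interior[OF f_cont] e b
    by (auto intro!: derivative_eq_intros)
  then show ?thesis
  proof (rule has_field_derivative_transform_within_open)
    show "open {e<..<b}" "x \<in> {e<..<b}" using e b by auto
    show "integral {e..y} f - integral {e..c} f = oint c y f" if "y \<in> {e<..<b}" for y
      using oint_eq_integral_diff[OF integrable_continuous_interval[OF f_cont], of c y] that e b
      by simp
  qed
qed

lemma oint_reciprocal_has_real_derivative:
  fixes R :: "real \<Rightarrow> real"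
  assumes R_cont: "\<And>y. y > a \<Longrightarrow> isCont R y" and R_nz: "\<And>y. y > a \<Longrightarrow> R y \<noteq> 0"
    and "c > a" "x > a"
  shows "((\<lambda>y. oint c y (\<lambda>t. 1 / R t)) has_real_derivative 1 / R x) (at x)"
proof -
  have "continuous_on {a<..} R"
    using R_cont by (simp add: continuous_at_imp_continuous_on)
  then have "continuous_on {a<..} (\<lambda>t. 1 / R t)"
    by (rule continuous_on_divide[OF continuous_on_const]) (simp add: R_nz)
  then show ?thesis
    using \<open>c > a\<close> \<open>x > a\<close> by (rule oint_has_real_derivative)
qed

lemma deriv_zero_tendsto_imp_const:
  fixes f :: "real \<Rightarrow> real"
  assumes f': "\<And>y. y > a \<Longrightarrow> (f has_real_derivative 0) (at y)"
    and lim: "(f \<longlongrightarrow> L) at_top" and x: "x > a"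
  shows "f x = L"
proof -
  have "eventually (\<lambda>y. f y = f x) at_top"
    using eventually_gt_at_top[of x]
  proof eventually_elim
    case (elim y)
    have "continuous_on {x..y} f"
      using x by (intro continuous_at_imp_continuous_on ballI DERIV_isCont[OF f']) auto
    then show ?case
      using x elim by (intro DERIV_isconst2[of x y f y]) (auto intro!: f')
  qed
  then have "(f \<longlongrightarrow> f x) at_top"
    by (rule tendsto_eventually)
  then show ?thesis
    using lim tendsto_unique by force
qed

lemma pos_if_nonzero_tendsto_pos:
  fixes f :: "real \<Rightarrow> real"
  assumes f: "continuous_on {a<..} f" and nz: "\<And>y. y > a \<Longrightarrow> f y \<noteq> 0"
    and lim: "(f \<longlongrightarrow> r) at_top" and "r > 0" and x: "x > a"
  shows "f x > 0"
proof (rule ccontr)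
  assume "\<not> f x > 0"
  then have "f x \<le> 0" by simp
  obtain N where N: "\<And>y. y \<ge> N \<Longrightarrow> f y > 0"
    using order_tendstoD(1)[OF lim \<open>r > 0\<close>] by (auto simp: eventually_at_top_linorder)
  define y where "y = max N x"
  have "continuous_on {x..y} f"
    using x by (intro continuous_on_subset[OF f]) auto
  moreover have "0 \<le> f y"
    using N[of y] by (simp add: y_def)
  ultimately obtain z where "x \<le> z" "z \<le> y" "f z = 0"
    using IVT'[of f x 0 y] \<open>f x \<le> 0\<close> by (auto simp: y_def)
  then show False
    using nz[of z] x by auto
qed

lemma appell_invariant:
  fixes P Q R q :: "real \<Rightarrow> real"
  assumes sys: "appell_system lam q {a<..} P Q R"
    and lP: "(P \<longlongrightarrow> p) at_top" and lQ: "(Q \<longlongrightarrow> 0) at_top" and lR: "(R \<longlongrightarrow> r) at_top"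
    and x: "x > a"
  shows "4 * P x * R x - (Q x)\<^sup>2 = 4 * p * r"
proof (rule deriv_zero_tendsto_imp_const[OF _ _ x])
  show "((\<lambda>x. 4 * P x * R x - (Q x)\<^sup>2) has_real_derivative 0) (at y)" if "y > a" for y
  proof -
    have "((\<lambda>x. 4 * P x * R x - (Q x)\<^sup>2) has_real_derivative
        4 * ((lam - q y) * Q y) * R y + 4 * P y * (- Q y)
        - 2 * Q y * (- 2 * P y + 2 * (lam - q y) * R y)) (at y)"
      using sys that unfolding appell_system_def
      by (intro derivative_eq_intros) (auto simp: power2_eq_square)
    then show ?thesis
      by (simp add: algebra_simps)
  qed
  have "((\<lambda>x. 4 * P x * R x - (Q x)\<^sup>2) \<longlongrightarrow> 4 * p * r - 0\<^sup>2) at_top"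
    by (intro tendsto_intros lP lQ lR)
  then show "((\<lambda>x. 4 * P x * R x - (Q x)\<^sup>2) \<longlongrightarrow> 4 * p * r) at_top"
    by simp
qed

lemma appell_positive:
  fixes P Q R q :: "real \<Rightarrow> real"
  assumes sys: "appell_system lam q {a<..} P Q R"
    and lP: "(P \<longlongrightarrow> p) at_top" and lQ: "(Q \<longlongrightarrow> 0) at_top" and lR: "(R \<longlongrightarrow> r) at_top"
    and "p > 0" "r > 0" and x: "x > a"
  shows "R x > 0 \<and> P x > 0"
proof -
  have PR: "4 * P y * R y = 4 * p * r + (Q y)\<^sup>2" if "y > a" for y
    using appell_invariant[OF sys lP lQ lR that] by simp
  have PR_pos: "P y * R y > 0" if "y > a" for y
  proof -
    have "4 * (P y * R y) = 4 * p * r + (Q y)\<^sup>2"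
      using PR[OF that] by (simp add: mult.assoc)
    moreover have "4 * p * r > 0" using \<open>p > 0\<close> \<open>r > 0\<close> by simp
    ultimately show ?thesis using zero_le_power2[of "Q y"] by linarith
  qed
  have R_nz: "R y \<noteq> 0" if "y > a" for y
    using PR_pos[OF that] by auto
  have dR: "(R has_real_derivative - Q y) (at y)" if "y > a" for y
    using sys that by (simp add: appell_system_def)
  have "continuous_on {a<..} R"
    using DERIV_isCont[OF dR] by (simp add: continuous_at_imp_continuous_on)
  then have "R x > 0"
    by (rule pos_if_nonzero_tendsto_pos[OF _ R_nz lR \<open>r > 0\<close> x])
  with PR_pos[OF x] show ?thesis
    by (simp add: zero_less_mult_iff)
qed

lemma integral_tendsto_at_top_if_tendsto_pos:
  fixes f :: "real \<Rightarrow> real"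
  assumes f: "continuous_on {x0..} f" and lim: "(f \<longlongrightarrow> r) at_top" and "r > 0"
  shows "filterlim (\<lambda>N. integral {x0..N} f) at_top at_top"
proof -
  obtain M where M: "\<And>y. y \<ge> M \<Longrightarrow> f y > r / 2"
    using order_tendstoD(1)[OF lim, of "r / 2"] \<open>r > 0\<close> by (auto simp: eventually_at_top_linorder)
  define M' where "M' = max M x0"
  have f_int: "f integrable_on {s..t}" if "x0 \<le> s" for s t
    using that by (intro integrable_continuous_interval continuous_on_subset[OF f]) auto
  have lower: "integral {x0..M'} f + r / 2 * (N - M') \<le> integral {x0..N} f" if N: "N \<ge> M'" for N
  proof -
    have "integral {x0..M'} f + integral {M'..N} f = integral {x0..N} f"
      using N by (intro Henstock_Kurzweil_Integration.integral_combine f_int) (auto simp: M'_def)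
    moreover have "integral {M'..N} (\<lambda>_. r / 2) \<le> integral {M'..N} f"
      using M by (intro integral_le f_int) (auto simp: M'_def less_imp_le)
    moreover have "integral {M'..N} (\<lambda>_. r / 2) = r / 2 * (N - M')"
      using N by simp
    ultimately show ?thesis
      by linarith
  qed
  have "filterlim (\<lambda>N. integral {x0..M'} f + r / 2 * (N - M')) at_top at_top"
    using \<open>r > 0\<close>
    by (intro filterlim_tendsto_add_at_top[OF tendsto_const]
          filterlim_tendsto_pos_mult_at_top[OF tendsto_const]
          filterlim_tendsto_add_at_top[OF tendsto_const filterlim_ident, of "- M'", simplified]) auto
  then show ?thesis
    by (rule filterlim_at_top_mono)
      (use eventually_ge_at_top[of M'] lower in \<open>blast intro: eventually_mono\<close>)
qed

lemma lhospital_at_top_bounded_correction: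
  fixes I D H d e :: "real \<Rightarrow> real"
  assumes D: "filterlim D at_top at_top"
    and D': "\<forall>\<^sub>F N in at_top. (D has_real_derivative d N) (at N)"
    and d: "\<forall>\<^sub>F N in at_top. d N \<noteq> 0"
    and IH': "\<forall>\<^sub>F N in at_top. ((\<lambda>N. I N - H N) has_real_derivative e N) (at N)"
    and H: "\<forall>\<^sub>F N in at_top. \<bar>H N\<bar> \<le> K"
    and e: "((\<lambda>N. e N / d N) \<longlongrightarrow> 0) at_top"
  shows "((\<lambda>N. I N / D N) \<longlongrightarrow> 0) at_top"
proof -
  have "((\<lambda>N. (I N - H N) / D N) \<longlongrightarrow> 0) at_top"
    by (rule lhospital_at_top_at_top[OF D d IH' D' e])
  moreover have "((\<lambda>N. H N / D N) \<longlongrightarrow> 0) at_top"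
  proof (rule tendsto_0_le[OF tendsto_inverse_0_at_top[OF D], where K = K])
    show "\<forall>\<^sub>F N in at_top. norm (H N / D N) \<le> norm (inverse (D N)) * K"
      using H
    proof eventually_elim
      case (elim N)
      then show ?case
        by (simp add: divide_inverse abs_mult mult.commute mult_right_mono)
    qed
  qed
  ultimately have "((\<lambda>N. (I N - H N) / D N + H N / D N) \<longlongrightarrow> 0 + 0) at_top"
    by (rule tendsto_add)
  then show ?thesis
    by (simp add: diff_divide_distrib)
qed

lemma abs_sin_cos_comb_le: "\<bar>\<alpha> * sin t + \<beta> * cos t\<bar> \<le> \<bar>\<alpha>\<bar> + \<bar>\<beta>::real\<bar>"
proof -
  have "\<bar>\<alpha> * sin t\<bar> \<le> \<bar>\<alpha>\<bar>" "\<bar>\<beta> * cos t\<bar> \<le> \<bar>\<beta>\<bar>"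
    by (simp_all add: abs_mult mult_left_le)
  then show ?thesis
    by linarith
qed

lemma oscillatory_antiderivative:
  fixes R Q \<Gamma> :: "real \<Rightarrow> real"
  assumes dR: "(R has_real_derivative - Q x) (at x)"
    and d\<Gamma>: "(\<Gamma> has_real_derivative 1 / R x) (at x)" and "R x \<noteq> 0"
  shows "((\<lambda>x. (R x)\<^sup>2 / 2 * (\<beta>2 * sin (2 * \<Gamma> x) - \<beta>3 * cos (2 * \<Gamma> x))) has_real_derivative
           \<beta>2 * (R x * cos (2 * \<Gamma> x)) + \<beta>3 * (R x * sin (2 * \<Gamma> x))
           - R x * Q x * (\<beta>2 * sin (2 * \<Gamma> x) - \<beta>3 * cos (2 * \<Gamma> x))) (at x)"
  using \<open>R x \<noteq> 0\<close>
  by (auto intro!: derivative_eq_intros dR d\<Gamma> simp: field_simps power2_eq_square)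

lemma continuous_on_atLeast_if_isCont:
  fixes a x0 :: real
  assumes "\<And>x. x > a \<Longrightarrow> isCont f x" and "x0 > a"
  shows "continuous_on {x0..} f"
proof (intro continuous_at_imp_continuous_on ballI)
  show "isCont f x" if "x \<in> {x0..}" for x
    using that assms(2) by (intro assms(1)) auto
qed

lemma oscillatory_integral_negligible:
  fixes R Q \<Gamma> :: "real \<Rightarrow> real"
  assumes dR: "\<And>x. x > a \<Longrightarrow> (R has_real_derivative - Q x) (at x)"
    and R_pos: "\<And>x. x > a \<Longrightarrow> R x > 0"
    and d\<Gamma>: "\<And>x. x > a \<Longrightarrow> (\<Gamma> has_real_derivative 1 / R x) (at x)"
    and lR: "(R \<longlongrightarrow> r) at_top" and "r > 0" and lQ: "(Q \<longlongrightarrow> 0) at_top" and "x0 > a"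
  shows "((\<lambda>N. integral {x0..N} (\<lambda>x. \<beta>2 * (R x * cos (2 * \<Gamma> x)) + \<beta>3 * (R x * sin (2 * \<Gamma> x)))
            / integral {x0..N} R) \<longlongrightarrow> 0) at_top"
proof -
  define W where "W x = \<beta>2 * (R x * cos (2 * \<Gamma> x)) + \<beta>3 * (R x * sin (2 * \<Gamma> x))" for x
  define S where "S x = \<beta>2 * sin (2 * \<Gamma> x) - \<beta>3 * cos (2 * \<Gamma> x)" for x
  define H where "H x = (R x)\<^sup>2 / 2 * S x" for x
  have S_bound: "\<bar>S x\<bar> \<le> \<bar>\<beta>2\<bar> + \<bar>\<beta>3\<bar>" for x
    using abs_sin_cos_comb_le[of \<beta>2 _ "- \<beta>3"] by (simp add: S_def)
  have W_isCont: "isCont W x" if "x > a" for x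
    unfolding W_def using DERIV_isCont[OF dR[OF that]] DERIV_isCont[OF d\<Gamma>[OF that]]
    by (auto intro!: continuous_intros)
  have W_cont: "continuous_on {x0..} W"
    by (rule continuous_on_atLeast_if_isCont[OF W_isCont \<open>x0 > a\<close>])
  have R_cont: "continuous_on {x0..} R"
    by (rule continuous_on_atLeast_if_isCont[OF DERIV_isCont[OF dR] \<open>x0 > a\<close>])
  have "((\<lambda>N. integral {x0..N} W / integral {x0..N} R) \<longlongrightarrow> 0) at_top"
  proof (rule lhospital_at_top_bounded_correction)
    show "filterlim (\<lambda>N. integral {x0..N} R) at_top at_top"
      by (rule integral_tendsto_at_top_if_tendsto_pos[OF R_cont lR \<open>r > 0\<close>])
    show "\<forall>\<^sub>F N in at_top. ((\<lambda>N. integral {x0..N} R) has_real_derivative R N) (at N)"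
      using eventually_gt_at_top[of x0]
      by eventually_elim (rule integral_atLeast_has_real_derivative[OF R_cont])
    show "\<forall>\<^sub>F N in at_top. R N \<noteq> 0"
      using eventually_gt_at_top[of a] by eventually_elim (use R_pos in force)
    show "\<forall>\<^sub>F N in at_top. ((\<lambda>N. integral {x0..N} W - H N) has_real_derivative R N * Q N * S N) (at N)"
      using eventually_gt_at_top[of x0]
    proof eventually_elim
      case (elim N)
      then have "N > a" using \<open>x0 > a\<close> by simp
      have "((\<lambda>N. integral {x0..N} W - H N) has_real_derivative W N - (W N - R N * Q N * S N)) (at N)"
        using integral_atLeast_has_real_derivative[OF W_cont elim] R_pos[OF \<open>N > a\<close>]
          oscillatory_antiderivative[where R = R and Q = Q and x = N,
            OF dR[OF \<open>N > a\<close>] d\<Gamma>[OF \<open>N > a\<close>]]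
        unfolding H_def S_def W_def by (intro derivative_intros) auto
      then show ?case by simp
    qed
    have "\<forall>\<^sub>F N in at_top. R N < r + 1"
      using order_tendstoD(2)[OF lR, of "r + 1"] by simp
    then show "\<forall>\<^sub>F N in at_top. \<bar>H N\<bar> \<le> (r + 1)\<^sup>2 / 2 * (\<bar>\<beta>2\<bar> + \<bar>\<beta>3\<bar>)"
      using eventually_gt_at_top[of a]
    proof eventually_elim
      case (elim N)
      then have "(R N)\<^sup>2 \<le> (r + 1)\<^sup>2"
        using R_pos[of N] by (intro power_mono) auto
      then show ?case
        unfolding H_def abs_mult using S_bound[of N] by (intro mult_mono) auto
    qed
    show "((\<lambda>N. R N * Q N * S N / R N) \<longlongrightarrow> 0) at_top"
    proof (rule tendsto_0_le[OF lQ, where K = "\<bar>\<beta>2\<bar> + \<bar>\<beta>3\<bar>"])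
      show "\<forall>\<^sub>F N in at_top. norm (R N * Q N * S N / R N) \<le> norm (Q N) * (\<bar>\<beta>2\<bar> + \<bar>\<beta>3\<bar>)"
        using eventually_gt_at_top[of a]
      proof eventually_elim
        case (elim N)
        then show ?case
          using R_pos[OF elim] S_bound[of N] by (simp add: abs_mult mult_left_mono)
      qed
    qed
  qed
  then show ?thesis
    by (simp add: W_def[abs_def])
qed

theorem lemma3:
  fixes qc :: "nat \<Rightarrow> real" and q :: "real \<Rightarrow> real"
    and P1 Q1 R1 :: "real \<Rightarrow> real \<Rightarrow> real"
    and A :: real and u du v dv :: "real \<Rightarrow> real \<Rightarrow> real"
  assumes q_series: "\<forall>x>0. summable (\<lambda>n. qc (n + 2) * x ^ n)"
    and q_def: "\<forall>x>0. q x = qc 0 / x\<^sup>2 + qc 1 / x + (\<Sum>n. qc (n + 2) * x ^ n)"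
    and q0: "qc 0 \<ge> - 1 / 4"
    and q01: "qc 0 \<noteq> 0 \<or> qc 1 \<noteq> 0"
    and q_inf: "\<exists>x0>0. q absolutely_integrable_on {x0..} \<or>
        (\<exists>q'. (\<forall>x\<ge>x0. (q has_real_derivative q' x) (at x)) \<and>
              q' absolutely_integrable_on {x0..} \<and> (q \<longlongrightarrow> 0) at_top)"
    and appell_P: "\<forall>lam>0. \<forall>x>0. (P1 lam has_real_derivative (lam - q x) * Q1 lam x) (at x)"
    and appell_Q: "\<forall>lam>0. \<forall>x>0. (Q1 lam has_real_derivative
                      (- 2 * P1 lam x + 2 * (lam - q x) * R1 lam x)) (at x)"
    and appell_R: "\<forall>lam>0. \<forall>x>0. (R1 lam has_real_derivative - Q1 lam x) (at x)"
    and lim_P: "\<forall>lam>0. (P1 lam \<longlongrightarrow> sqrt lam) at_top"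
    and lim_Q: "\<forall>lam>0. (Q1 lam \<longlongrightarrow> 0) at_top"
    and lim_R: "\<forall>lam>0. (R1 lam \<longlongrightarrow> 1 / sqrt lam) at_top"
    and A_pos: "A > 0"
    and u_ode: "\<forall>lam>0. \<forall>x>0. (u lam has_real_derivative du lam x) (at x) \<and>
                 (du lam has_real_derivative (q x - lam) * u lam x) (at x)"
    and v_ode: "\<forall>lam>0. \<forall>x>0. (v lam has_real_derivative dv lam x) (at x) \<and>
                 (dv lam has_real_derivative (q x - lam) * v lam x) (at x)"
    and u_init: "\<forall>lam>0. u lam A = 1 \<and> du lam A = 0"
    and v_init: "\<forall>lam>0. v lam A = 0 \<and> dv lam A = 1"
  shows "(\<forall>lam>0. \<forall>c>0. \<forall>\<beta>2 \<beta>3 :: real. \<forall>x0>0.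
            let \<gamma> = (\<lambda>x. oint c x (\<lambda>t. 1 / R1 lam t));
                R = (\<lambda>x. \<beta>2 * (R1 lam x * cos (2 * \<gamma> x)) + \<beta>3 * (R1 lam x * sin (2 * \<gamma> x)))
            in ((\<lambda>N. integral {x0..N} R / integral {x0..N} (R1 lam)) \<longlongrightarrow> 0) at_top)
       \<and> (\<forall>a b cf :: real \<Rightarrow> real.
            (\<forall>lam>0. \<forall>x>0.
                P1 lam x = a lam * (du lam x)\<^sup>2 + b lam * (du lam x * dv lam x)
                           + cf lam * (dv lam x)\<^sup>2
              \<and> Q1 lam x = a lam * (- 2 * u lam x * du lam x)
                           + b lam * (- (u lam x * dv lam x + du lam x * v lam x))
                           + cf lam * (- 2 * v lam x * dv lam x)
              \<and> R1 lam x = a lam * (u lam x)\<^sup>2 + b lam * (u lam x * v lam x)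
                           + cf lam * (v lam x)\<^sup>2)
            \<longrightarrow> (\<forall>lam>0. a lam > 0 \<and> cf lam > 0))"
proof -
  have sys: "appell_system lam q {0<..} (P1 lam) (Q1 lam) (R1 lam)" if "lam > 0" for lam
    using appell_P appell_Q appell_R that by (simp add: appell_system_def)
  have pos: "R1 lam x > 0 \<and> P1 lam x > 0" if "lam > 0" "x > 0" for lam x
    using that lim_P lim_Q lim_R
    by (intro appell_positive[OF sys[OF that(1)], where p = "sqrt lam" and r = "1 / sqrt lam"]) auto
  show ?thesis
  proof ((rule conjI; intro allI impI), goal_cases)
    case (1 lam c \<beta>2 \<beta>3 x0)
    have dR: "(R1 lam has_real_derivative - Q1 lam x) (at x)" if "x > 0" for x
      using appell_R \<open>lam > 0\<close> that by simp
    have R_pos: "R1 lam x > 0" if "x > 0" for x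
      using pos \<open>lam > 0\<close> that by simp
    have d\<gamma>: "((\<lambda>x. oint c x (\<lambda>t. 1 / R1 lam t)) has_real_derivative 1 / R1 lam x) (at x)"
      if "x > 0" for x
      using DERIV_isCont[OF dR] less_imp_neq[OF R_pos] \<open>c > 0\<close> that
      by (intro oint_reciprocal_has_real_derivative) auto
    show ?case
      unfolding Let_def using 1 lim_R lim_Q
      by (intro oscillatory_integral_negligible[OF dR R_pos d\<gamma>, where r = "1 / sqrt lam"]) auto
  next
    case (2 a b cf lam)
    then have "R1 lam A = a lam" "P1 lam A = cf lam"
      using A_pos u_init v_init by auto
    then show ?case
      using pos[OF \<open>lam > 0\<close> A_pos] by simp
  qed
qed

end
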